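(* Let $\mathcal{A}$ be a normal cyclotomic $S$-ring with trivial radical over a finite cyclic group $G$, and let $K\le\mathrm{Aut}(G)$ be such that $\mathcal{A}=\mathrm{Cyc}(K,G)$. Then $\mathrm{Aut}(\mathcal{A})=G_{right}\rtimes K$.
   Context: An $S$-ring over $G$ is a subring $\mathcal{A}\subseteq\mathbb{Z}G$ spanned by the elements $\underline{X}=\sum_{x\in X}x$ for $X$ in a partition $\mathcal{S}(\mathcal{A})$ of $G$ (basic sets) with $\{e\}\in\mathcal{S}(\mathcal{A})$ and closed under $X\mapsto X^{-1}$. For $K\le\mathrm{Aut}(G)$, $\mathrm{Cyc}(K,G)$ is the $S$-ring whose basic sets are the $K$-orbits; $\mathcal{A}$ is cyclotomic if it equals $\mathrm{Cyc}(K,G)$ for some $K$. For $X\in\mathcal{S}(\mathcal{A})$ let $r(X)=\{(g,xg):g\in G,x\in X\}$; $\mathrm{Aut}(\mathcal{A})$ is the group of permutations $f$ of $G$ with $r(X)^f=r(X)$ for all basic sets $X$. $G_{right}$ is the group of right multiplications $g\mapsto gh$, $h\in G$. $\mathcal{A}$ is normal if $G_{right}$ is normal in $\mathrm{Aut}(\mathcal{A})$. For $X\subseteq G$, $\mathrm{rad}(X)=\{g\in G:gX=Xg=X\}$; the radical of $\mathcal{A}$ (over cyclic $G$) is $\mathrm{rad}(X)$ for a basic set $X$ containing a generator of $G$, and it is trivial if it equals $\{e\}$. *)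

theory Defs
  imports "HOL-Algebra.Algebra"
begin

definition is_generator :: "('a, 'b) monoid_scheme \<Rightarrow> 'a \<Rightarrow> bool" where
  "is_generator G g \<longleftrightarrow> g \<in> carrier G \<and> generate G {g} = carrier G"

definition cyclic_grp :: "('a, 'b) monoid_scheme \<Rightarrow> bool" where
  "cyclic_grp G \<longleftrightarrow> group G \<and> (\<exists>g. is_generator G g)"

text \<open>An S-ring over G, represented by its set S of basic sets.  The Z-span of
the elements sum(T), T in S, is a subring of ZG iff it contains 1 (i.e. {e} in S)
and the product sum(T)*sum(Y) lies in the span, i.e. for every Z in S the number of
pairs (x,y) in T x Y with x y = z does not depend on z in Z.\<close>
definition is_S_ring :: "('a, 'b) monoid_scheme \<Rightarrow> 'a set set \<Rightarrow> bool" where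
  "is_S_ring G S \<longleftrightarrow>
     (\<forall>T\<in>S. T \<noteq> {} \<and> T \<subseteq> carrier G) \<and>
     (\<forall>T\<in>S. \<forall>Y\<in>S. T \<noteq> Y \<longrightarrow> T \<inter> Y = {}) \<and>
     \<Union>S = carrier G \<and>
     {\<one>\<^bsub>G\<^esub>} \<in> S \<and>
     (\<forall>T\<in>S. (\<lambda>x. inv\<^bsub>G\<^esub> x) ` T \<in> S) \<and>
     (\<forall>T\<in>S. \<forall>Y\<in>S. \<forall>Z\<in>S. \<forall>z\<in>Z. \<forall>z'\<in>Z.
        card {(x, y). x \<in> T \<and> y \<in> Y \<and> x \<otimes>\<^bsub>G\<^esub> y = z}
      = card {(x, y). x \<in> T \<and> y \<in> Y \<and> x \<otimes>\<^bsub>G\<^esub> y = z'})"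

definition Cyc :: "('a \<Rightarrow> 'a) set \<Rightarrow> ('a, 'b) monoid_scheme \<Rightarrow> 'a set set" where
  "Cyc K G = {{\<sigma> x | \<sigma>. \<sigma> \<in> K} | x. x \<in> carrier G}"

definition rel_of :: "('a, 'b) monoid_scheme \<Rightarrow> 'a set \<Rightarrow> ('a \<times> 'a) set" where
  "rel_of G T = {(g, x \<otimes>\<^bsub>G\<^esub> g) | g x. g \<in> carrier G \<and> x \<in> T}"

definition AutS :: "('a, 'b) monoid_scheme \<Rightarrow> 'a set set \<Rightarrow> ('a \<Rightarrow> 'a) set" where
  "AutS G S = {f \<in> Bij (carrier G).
      \<forall>T\<in>S. (\<lambda>(a, b). (f a, f b)) ` rel_of G T = rel_of G T}"

definition AutS_group :: "('a, 'b) monoid_scheme \<Rightarrow> 'a set set \<Rightarrow> ('a \<Rightarrow> 'a) monoid" where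
  "AutS_group G S = (BijGroup (carrier G)) \<lparr>carrier := AutS G S\<rparr>"

definition G_right :: "('a, 'b) monoid_scheme \<Rightarrow> ('a \<Rightarrow> 'a) set" where
  "G_right G = {(\<lambda>g\<in>carrier G. g \<otimes>\<^bsub>G\<^esub> h) | h. h \<in> carrier G}"

definition is_normal_S_ring :: "('a, 'b) monoid_scheme \<Rightarrow> 'a set set \<Rightarrow> bool" where
  "is_normal_S_ring G S \<longleftrightarrow> G_right G \<lhd> AutS_group G S"

definition rad :: "('a, 'b) monoid_scheme \<Rightarrow> 'a set \<Rightarrow> 'a set" where
  "rad G T = {g \<in> carrier G. g <#\<^bsub>G\<^esub> T = T \<and> T #>\<^bsub>G\<^esub> g = T}"

definition trivial_radical :: "('a, 'b) monoid_scheme \<Rightarrow> 'a set set \<Rightarrow> bool" where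
  "trivial_radical G S \<longleftrightarrow>
     (\<exists>T\<in>S. (\<exists>g\<in>T. is_generator G g) \<and> rad G T = {\<one>\<^bsub>G\<^esub>})"

definition is_semidirect :: "('c, 'd) monoid_scheme \<Rightarrow> 'c set \<Rightarrow> 'c set \<Rightarrow> bool" where
  "is_semidirect H N K \<longleftrightarrow>
     N \<lhd> H \<and> subgroup K H \<and> N \<inter> K = {\<one>\<^bsub>H\<^esub>} \<and> N <#>\<^bsub>H\<^esub> K = carrier H"

end

theory Submission
  imports Defs
begin

(* Normality of G_right in Aut(A) means that every f in Aut(A) conjugates right translations
   into right translations: f(x a) = f(x) b_a for all x.  Composing with a right translation
   we may assume f(e) = e; then b_a = f(a), so f is a group automorphism.  Since (e, g) lies
   in r(g^K) for a generator g and f fixes e, f(g) lies in the orbit g^K, so f agrees with some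
   \<sigma> in K on g and hence everywhere.  Conversely K and G_right lie in Aut(A), and they meet
   trivially because the only right translation fixing e is the identity. *)

definition right_transl :: "('a, 'b) monoid_scheme \<Rightarrow> 'a \<Rightarrow> 'a \<Rightarrow> 'a" where
  "right_transl G h = (\<lambda>x\<in>carrier G. x \<otimes>\<^bsub>G\<^esub> h)"

lemma G_right_eq_image: "G_right G = right_transl G ` carrier G"
  by (auto simp: G_right_def right_transl_def)

lemma Bij_eqI:
  assumes "f \<in> Bij S" "k \<in> Bij S" "\<And>x. x \<in> S \<Longrightarrow> f x = k x"
  shows "f = k"
  using assms by (blast intro: extensionalityI Bij_imp_extensional)

lemma BijGroup_mult_apply:
  assumes "f \<in> Bij S" "k \<in> Bij S" "x \<in> S"
  shows "(f \<otimes>\<^bsub>BijGroup S\<^esub> k) x = f (k x)"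
  using assms by (simp add: BijGroup_def compose_eq)

lemma (in group) AutoGroup_mult_apply:
  assumes "a \<in> auto G" "b \<in> auto G" "x \<in> carrier G"
  shows "(a \<otimes>\<^bsub>AutoGroup G\<^esub> b) x = a (b x)"
  using assms by (simp add: AutoGroup_def auto_def BijGroup_mult_apply)

lemma subgroup_AutoGroup_subset_auto: "subgroup K (AutoGroup G) \<Longrightarrow> K \<subseteq> auto G"
  using subgroup.subset by (fastforce simp: AutoGroup_def)

lemma (in group) subgroup_AutoGroup_imp_subgroup_BijGroup:
  assumes "subgroup K (AutoGroup G)"
  shows "subgroup K (BijGroup (carrier G))"
  using group.incl_subgroup[OF group_BijGroup subgroup_auto] assms by (simp add: AutoGroup_def)

lemma AutS_subgroup_if_normal:
  assumes "is_normal_S_ring G S"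
  shows "subgroup (AutS G S) (BijGroup (carrier G))"
proof (rule group.group_incl_imp_subgroup[OF group_BijGroup])
  show "AutS G S \<subseteq> carrier (BijGroup (carrier G))"
    by (auto simp: AutS_def BijGroup_def)
  show "group ((BijGroup (carrier G))\<lparr>carrier := AutS G S\<rparr>)"
    using assms normal.axioms(2) by (fastforce simp: is_normal_S_ring_def AutS_group_def)
qed

lemma G_right_subset_AutS_if_normal:
  assumes "is_normal_S_ring G S"
  shows "G_right G \<subseteq> AutS G S"
  using assms normal_imp_subgroup subgroup.subset
  by (fastforce simp: is_normal_S_ring_def AutS_group_def)

lemma (in group) right_transl_apply [simp]:
  "x \<in> carrier G \<Longrightarrow> right_transl G h x = x \<otimes> h"
  by (simp add: right_transl_def)

lemma (in group) G_right_Int_hom: "G_right G \<inter> hom G G = {\<lambda>x\<in>carrier G. x}"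
proof
  show "G_right G \<inter> hom G G \<subseteq> {\<lambda>x\<in>carrier G. x}"
  proof
    fix n assume "n \<in> G_right G \<inter> hom G G"
    then obtain h where h: "h \<in> carrier G" and n: "n = right_transl G h" and "n \<in> hom G G"
      by (auto simp: G_right_eq_image)
    then have "h = \<one>"
      using group_hom.hom_one[of G G n] by (simp add: group_hom_def group_hom_axioms_def is_group)
    then show "n \<in> {\<lambda>x\<in>carrier G. x}"
      by (auto simp: n right_transl_def intro: restrict_ext)
  qed
  have "(\<lambda>x\<in>carrier G. x) = right_transl G \<one>"
    unfolding right_transl_def by (rule restrict_ext) simp
  then show "{\<lambda>x\<in>carrier G. x} \<subseteq> G_right G \<inter> hom G G"
    using id_in_auto by (auto simp: G_right_eq_image auto_def)
qed

lemma (in group) hom_eq_on_generate: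
  assumes "group H" "f \<in> hom G H" "k \<in> hom G H" "A \<subseteq> carrier G"
    and "\<And>a. a \<in> A \<Longrightarrow> f a = k a" and "x \<in> generate G A"
  shows "f x = k x"
  using assms(6)
proof (induction x rule: generate.induct)
  interpret f: group_hom G H f using assms(1,2) by (simp add: group_hom_def group_hom_axioms_def is_group)
  interpret k: group_hom G H k using assms(1,3) by (simp add: group_hom_def group_hom_axioms_def is_group)
  {
    case one
    then show ?case by simp
  next
    case (incl a)
    then show ?case using assms(5) by simp
  next
    case (inv a)
    then show ?case using assms(4,5) by auto
  next
    case (eng a b)
    then show ?case using generate_incl assms(4) by (auto simp: subset_iff)
  }
qed

lemma (in group) hom_if_normalizes_right_transl:
  assumes "f \<in> carrier G \<rightarrow> carrier G" "f \<one> = \<one>"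
    and "\<And>a. a \<in> carrier G \<Longrightarrow> \<exists>b\<in>carrier G. \<forall>x\<in>carrier G. f (x \<otimes> a) = f x \<otimes> b"
  shows "f \<in> hom G G"
proof (rule homI)
  fix x a assume x: "x \<in> carrier G" and a: "a \<in> carrier G"
  obtain b where b: "b \<in> carrier G" and fb: "\<forall>y\<in>carrier G. f (y \<otimes> a) = f y \<otimes> b"
    using assms(3) a by blast
  have "f a = b" using fb assms(2) a b by (metis l_one one_closed)
  then show "f (x \<otimes> a) = f x \<otimes> f a" using fb x by simp
qed (use assms(1) in auto)

lemma (in group) AutS_normalizes_right_transl:
  assumes "is_normal_S_ring G S" "f \<in> AutS G S" "a \<in> carrier G"
  shows "\<exists>b\<in>carrier G. \<forall>x\<in>carrier G. f (x \<otimes> a) = f x \<otimes> b"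
proof -
  let ?A = "AutS_group G S"
  have N: "G_right G \<lhd> ?A" using assms(1) by (simp add: is_normal_S_ring_def)
  have "f \<otimes>\<^bsub>?A\<^esub> right_transl G a \<in> f <#\<^bsub>?A\<^esub> G_right G"
    using assms(3) by (auto simp: l_coset_def G_right_eq_image)
  also have "\<dots> = G_right G #>\<^bsub>?A\<^esub> f"
    using normal.coset_eq[OF N] assms(2) by (simp add: AutS_group_def)
  finally obtain b where b: "b \<in> carrier G"
    and eq: "f \<otimes>\<^bsub>?A\<^esub> right_transl G a = right_transl G b \<otimes>\<^bsub>?A\<^esub> f"
    by (auto simp: r_coset_def G_right_eq_image)
  have f_Bij: "f \<in> Bij (carrier G)" using assms(2) by (simp add: AutS_def)
  have r_Bij: "right_transl G c \<in> Bij (carrier G)" if "c \<in> carrier G" for c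
    using G_right_subset_AutS_if_normal[OF assms(1)] that by (auto simp: AutS_def G_right_eq_image)
  have "f (x \<otimes> a) = f x \<otimes> b" if x: "x \<in> carrier G" for x
  proof -
    have fx: "f x \<in> carrier G" using f_Bij Bij_imp_funcset x by blast
    have "f (x \<otimes> a) = (f \<otimes>\<^bsub>?A\<^esub> right_transl G a) x"
      using f_Bij r_Bij assms(3) x by (simp add: AutS_group_def BijGroup_mult_apply)
    also have "\<dots> = (right_transl G b \<otimes>\<^bsub>?A\<^esub> f) x" by (simp add: eq)
    also have "\<dots> = f x \<otimes> b"
      using f_Bij r_Bij b x fx by (simp add: AutS_group_def BijGroup_mult_apply)
    finally show ?thesis .
  qed
  then show ?thesis using b by blast
qed

lemma (in group) AutS_stabilizer_preserves_basic_set: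
  assumes "f \<in> AutS G S" "T \<in> S" "T \<subseteq> carrier G" "f \<one> = \<one>" "x \<in> T"
  shows "f x \<in> T"
proof -
  have "(\<one>, x \<otimes> \<one>) \<in> rel_of G T" using assms(5) by (auto simp: rel_of_def)
  then have "(\<one>, f x) \<in> (\<lambda>(a, b). (f a, f b)) ` rel_of G T"
    using assms(3-5) by (force simp: subset_iff)
  also have "\<dots> = rel_of G T" using assms(1,2) by (simp add: AutS_def)
  finally show ?thesis using assms(3) by (auto simp: rel_of_def subset_iff)
qed

lemma (in group) Cyc_subset_carrier:
  assumes "subgroup K (AutoGroup G)" "T \<in> Cyc K G"
  shows "T \<subseteq> carrier G"
  using assms subgroup_AutoGroup_subset_auto Bij_imp_funcset by (fastforce simp: Cyc_def auto_def)

lemma (in group) Cyc_image_eq: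
  assumes K: "subgroup K (AutoGroup G)" and k: "k \<in> K" and T: "T \<in> Cyc K G"
  shows "k ` T = T"
proof -
  interpret Aut: group "AutoGroup G" by (rule AutoGroup)
  have auto: "\<sigma> \<in> auto G" if "\<sigma> \<in> K" for \<sigma>
    using subgroup_AutoGroup_subset_auto[OF K] that by blast
  obtain x where x: "x \<in> carrier G" and T: "T = {\<sigma> x | \<sigma>. \<sigma> \<in> K}"
    using T by (auto simp: Cyc_def)
  have "k (\<sigma> x) = (k \<otimes>\<^bsub>AutoGroup G\<^esub> \<sigma>) x" if "\<sigma> \<in> K" for \<sigma>
    using AutoGroup_mult_apply auto k that x by simp
  then have "k ` T \<subseteq> T"
    using subgroup.m_closed[OF K k] T by blast
  moreover have "\<sigma> x \<in> k ` T" if \<sigma>: "\<sigma> \<in> K" for \<sigma>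
  proof -
    let ?\<tau> = "inv\<^bsub>AutoGroup G\<^esub> k \<otimes>\<^bsub>AutoGroup G\<^esub> \<sigma>"
    have \<tau>: "?\<tau> \<in> K" using K k \<sigma> by (simp add: subgroup.m_closed subgroup.m_inv_closed)
    have "k (?\<tau> x) = (k \<otimes>\<^bsub>AutoGroup G\<^esub> ?\<tau>) x" using AutoGroup_mult_apply auto k \<tau> x by simp
    also have "k \<otimes>\<^bsub>AutoGroup G\<^esub> ?\<tau> = \<sigma>"
      using subgroup.mem_carrier[OF K] k \<sigma> by (simp add: Aut.m_assoc[symmetric])
    finally have "\<sigma> x = k (?\<tau> x)" ..
    moreover have "?\<tau> x \<in> T" using \<tau> T by blast
    ultimately show ?thesis by blast
  qed
  ultimately show ?thesis using T by blast
qed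

lemma (in group) rel_of_image_auto:
  assumes k: "k \<in> auto G" and T: "T \<subseteq> carrier G"
  shows "(\<lambda>(a, b). (k a, k b)) ` rel_of G T = rel_of G (k ` T)"
proof -
  have hom: "k \<in> hom G G" and bij: "bij_betw k (carrier G) (carrier G)"
    using k by (auto simp: auto_def Bij_def)
  have mult: "k (x \<otimes> a) = k x \<otimes> k a" if "a \<in> carrier G" "x \<in> T" for a x
    using hom that T by (auto simp: hom_def)
  show ?thesis
  proof (intro equalityI subsetI)
    fix p assume "p \<in> (\<lambda>(a, b). (k a, k b)) ` rel_of G T"
    then obtain a x where a: "a \<in> carrier G" and x: "x \<in> T" and p: "p = (k a, k (x \<otimes> a))"
      by (auto simp: rel_of_def)
    have "k a \<in> carrier G" using hom a by (simp add: hom_def Pi_iff)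
    then show "p \<in> rel_of G (k ` T)"
      using mult[OF a x] x unfolding p rel_of_def by blast
  next
    fix p assume "p \<in> rel_of G (k ` T)"
    then obtain b x where b: "b \<in> carrier G" and x: "x \<in> T" and p: "p = (b, k x \<otimes> b)"
      by (auto simp: rel_of_def)
    obtain a where a: "a \<in> carrier G" and ba: "b = k a"
      using bij b by (auto simp: bij_betw_def)
    have "p = (\<lambda>(a, b). (k a, k b)) (a, x \<otimes> a)" using mult[OF a x] p ba by simp
    moreover have "(a, x \<otimes> a) \<in> rel_of G T" using a x by (auto simp: rel_of_def)
    ultimately show "p \<in> (\<lambda>(a, b). (k a, k b)) ` rel_of G T" by blast
  qed
qed

lemma (in group) subset_AutS_Cyc:
  assumes K: "subgroup K (AutoGroup G)"
  shows "K \<subseteq> AutS G (Cyc K G)"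
proof
  fix k assume k: "k \<in> K"
  then have "k \<in> auto G" using subgroup_AutoGroup_subset_auto[OF K] by blast
  then show "k \<in> AutS G (Cyc K G)"
    using rel_of_image_auto Cyc_image_eq[OF K k] Cyc_subset_carrier[OF K]
    by (simp add: AutS_def auto_def)
qed

lemma (in group) AutS_Cyc_decompose:
  assumes g: "is_generator G g" and K: "subgroup K (AutoGroup G)"
    and normal: "is_normal_S_ring G (Cyc K G)" and f: "f \<in> AutS G (Cyc K G)"
  obtains h \<sigma> where "h \<in> carrier G" "\<sigma> \<in> K"
    and "f = right_transl G h \<otimes>\<^bsub>BijGroup (carrier G)\<^esub> \<sigma>"
proof -
  let ?S = "Cyc K G" and ?B = "BijGroup (carrier G)"
  have A: "subgroup (AutS G ?S) ?B" using normal by (rule AutS_subgroup_if_normal)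
  have r: "right_transl G c \<in> AutS G ?S" if "c \<in> carrier G" for c
    using G_right_subset_AutS_if_normal[OF normal] that by (auto simp: G_right_eq_image)
  have Bij: "\<phi> \<in> Bij (carrier G)" if "\<phi> \<in> AutS G ?S" for \<phi>
    using that by (simp add: AutS_def)
  have f_closed: "f x \<in> carrier G" if "x \<in> carrier G" for x
    using Bij[OF f] Bij_imp_funcset that by blast
  define h where "h = f \<one>"
  have h: "h \<in> carrier G" by (simp add: h_def f_closed)
  define f0 where "f0 = right_transl G (inv h) \<otimes>\<^bsub>?B\<^esub> f"
  have f0: "f0 \<in> AutS G ?S" using A r f h by (simp add: f0_def subgroup.m_closed)
  have f0_apply: "f0 x = f x \<otimes> inv h" if "x \<in> carrier G" for x
    using that Bij r f h f_closed by (simp add: f0_def BijGroup_mult_apply)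
  have f0_one: "f0 \<one> = \<one>" using h by (simp add: f0_apply h_def)
  have f0_hom: "f0 \<in> hom G G"
    using hom_if_normalizes_right_transl f0_one AutS_normalizes_right_transl[OF normal f0]
      Bij[OF f0] Bij_imp_funcset by blast
  define T where "T = {\<sigma> g | \<sigma>. \<sigma> \<in> K}"
  have gC: "g \<in> carrier G" and gen: "generate G {g} = carrier G"
    using g by (auto simp: is_generator_def)
  have T: "T \<in> ?S" using gC by (auto simp: T_def Cyc_def)
  have "(\<lambda>x\<in>carrier G. x) \<in> K"
    using subgroup.one_closed[OF K] by (simp add: AutoGroup_def BijGroup_def)
  then have "(\<lambda>x\<in>carrier G. x) g \<in> T" unfolding T_def by blast
  then have "g \<in> T" using gC by simp
  then have "f0 g \<in> T"
    by (rule AutS_stabilizer_preserves_basic_set[OF f0 T Cyc_subset_carrier[OF K T] f0_one])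
  then obtain \<sigma> where \<sigma>: "\<sigma> \<in> K" and f0_g: "f0 g = \<sigma> g" by (auto simp: T_def)
  have \<sigma>_auto: "\<sigma> \<in> auto G" using subgroup_AutoGroup_subset_auto[OF K] \<sigma> by blast
  have f0_eq_\<sigma>: "f0 x = \<sigma> x" if "x \<in> carrier G" for x
  proof (rule hom_eq_on_generate[where A = "{g}", OF is_group f0_hom])
    show "\<sigma> \<in> hom G G" using \<sigma>_auto by (simp add: auto_def)
  qed (use gC f0_g gen that in auto)
  have "f = right_transl G h \<otimes>\<^bsub>?B\<^esub> \<sigma>"
  proof (rule Bij_eqI)
    show "right_transl G h \<otimes>\<^bsub>?B\<^esub> \<sigma> \<in> Bij (carrier G)"
      using r[OF h] Bij \<sigma>_auto by (simp add: BijGroup_def auto_def compose_Bij)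
  next
    fix x assume x: "x \<in> carrier G"
    have "\<sigma> x \<in> carrier G" using \<sigma>_auto x Bij_imp_funcset by (fastforce simp: auto_def)
    then have "(right_transl G h \<otimes>\<^bsub>?B\<^esub> \<sigma>) x = f0 x \<otimes> h"
      using Bij r[OF h] \<sigma>_auto x f0_eq_\<sigma> by (simp add: auto_def BijGroup_mult_apply)
    also have "\<dots> = f x" using x f_closed h by (simp add: f0_apply m_assoc)
    finally show "f x = (right_transl G h \<otimes>\<^bsub>?B\<^esub> \<sigma>) x" ..
  qed (rule Bij[OF f])
  then show ?thesis using that h \<sigma> by blast
qed

lemma (in group) AutS_Cyc_eq_set_mult:
  assumes "is_generator G g" and K: "subgroup K (AutoGroup G)"
    and normal: "is_normal_S_ring G (Cyc K G)"
  shows "AutS G (Cyc K G) = G_right G <#>\<^bsub>BijGroup (carrier G)\<^esub> K"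
proof
  show "AutS G (Cyc K G) \<subseteq> G_right G <#>\<^bsub>BijGroup (carrier G)\<^esub> K"
  proof
    fix f assume "f \<in> AutS G (Cyc K G)"
    then obtain h \<sigma> where "h \<in> carrier G" "\<sigma> \<in> K"
      and "f = right_transl G h \<otimes>\<^bsub>BijGroup (carrier G)\<^esub> \<sigma>"
      by (rule AutS_Cyc_decompose[OF assms])
    then show "f \<in> G_right G <#>\<^bsub>BijGroup (carrier G)\<^esub> K"
      by (auto simp: set_mult_def G_right_eq_image)
  qed
  show "G_right G <#>\<^bsub>BijGroup (carrier G)\<^esub> K \<subseteq> AutS G (Cyc K G)"
    using subgroup.m_closed[OF AutS_subgroup_if_normal[OF normal]]
      G_right_subset_AutS_if_normal[OF normal] subset_AutS_Cyc[OF K]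
    by (auto simp: set_mult_def)
qed

lemma (in group) subgroup_AutS_group_Cyc:
  assumes K: "subgroup K (AutoGroup G)" and normal: "is_normal_S_ring G (Cyc K G)"
  shows "subgroup K (AutS_group G (Cyc K G))"
  unfolding AutS_group_def
  using group.subgroup_incl[OF group_BijGroup subgroup_AutoGroup_imp_subgroup_BijGroup[OF K]
      AutS_subgroup_if_normal[OF normal] subset_AutS_Cyc[OF K]] .

lemma (in group) G_right_Int_subgroup_AutoGroup:
  assumes K: "subgroup K (AutoGroup G)"
  shows "G_right G \<inter> K = {\<one>\<^bsub>BijGroup (carrier G)\<^esub>}"
proof -
  have "K \<subseteq> hom G G" using subgroup_AutoGroup_subset_auto[OF K] by (auto simp: auto_def)
  moreover have "\<one>\<^bsub>BijGroup (carrier G)\<^esub> \<in> K"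
    using subgroup.one_closed[OF K] by (simp add: AutoGroup_def)
  ultimately show ?thesis using G_right_Int_hom by (auto simp: BijGroup_def)
qed

theorem lemma6p5:
  fixes G :: "('a, 'b) monoid_scheme" and K :: "('a \<Rightarrow> 'a) set" and S :: "'a set set"
  assumes "cyclic_grp G" and "finite (carrier G)"
    and "subgroup K (AutoGroup G)"
    and "S = Cyc K G"
    and "is_S_ring G S"
    and "is_normal_S_ring G S"
    and "trivial_radical G S"
  shows "AutS G S = G_right G <#>\<^bsub>BijGroup (carrier G)\<^esub> K
    \<and> is_semidirect (AutS_group G S) (G_right G) K"
proof -
  interpret group G using assms(1) by (simp add: cyclic_grp_def)
  obtain g where g: "is_generator G g" using assms(1) by (auto simp: cyclic_grp_def)
  have normal: "is_normal_S_ring G (Cyc K G)" using assms(4,6) by simp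
  have "G_right G <#>\<^bsub>AutS_group G S\<^esub> K = G_right G <#>\<^bsub>BijGroup (carrier G)\<^esub> K"
    by (simp add: set_mult_def AutS_group_def)
  moreover have "\<one>\<^bsub>AutS_group G S\<^esub> = \<one>\<^bsub>BijGroup (carrier G)\<^esub>"
    by (simp add: AutS_group_def)
  ultimately show ?thesis
    using AutS_Cyc_eq_set_mult[OF g assms(3) normal] subgroup_AutS_group_Cyc[OF assms(3) normal]
      G_right_Int_subgroup_AutoGroup[OF assms(3)] assms(4,6)
    by (simp add: is_semidirect_def is_normal_S_ring_def AutS_group_def)
qed

end
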